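(* Let $T=(\{T_g\}_{g\in G},\{\gamma_{g,h}\}_{g,h\in G},u)$ be an action of a group $G$ on a semigroupal category $\mathcal{C}$ and let $\mathcal{I}$ be an ideal of $\mathcal{C}$. Then (1) $\overline{T_e(\mathcal{I})}=\mathcal{I}$; (2) $\overline{T_g(\overline{T_h(\mathcal{I})})}=\overline{T_{gh}(\mathcal{I})}$ for all $g,h\in G$.
   Context: A semigroupal category is a (strict) category with a tensor product functor and associator satisfying the pentagon axiom. An action of a group $G$ (with unit $e$) on $\mathcal{C}$ is a monoidal functor from $G$ (viewed as a discrete monoidal category) to the monoidal category of semigroupal auto-equivalences of $\mathcal{C}$; concretely, a triple consisting of semigroupal auto-equivalences $T_g$ of $\mathcal{C}$, natural isomorphisms of semigroupal functors $\gamma_{g,h}\colon T_gT_h\Rightarrow T_{gh}$ and $u\colon\mathrm{Id}_{\mathcal{C}}\Rightarrow T_e$, such that $(\gamma_{gh,k})_X\circ(\gamma_{g,h})_{T_k(X)}=(\gamma_{g,hk})_X\circ T_g((\gamma_{h,k})_X)$ for all $g,h,k$ and $X$, and such that $u_{T_g(X)}$ and $(\gamma_{e,g})_X$ are mutually inverse, as are $T_g(u_X)$ and $(\gamma_{g,e})_X$. For a subcategory $\mathcal{D}$, $\overline{\mathcal{D}}$ denotes its isomorphism closure: the smallest subcategory of $\mathcal{C}$ containing $\mathcal{D}$ and closed under isomorphisms (for each object $X$ in it and each isomorphism $\varphi\colon X\to X'$ in $\mathcal{C}$, $X'$ and $\varphi$ are in it). An ideal of $\mathcal{C}$ is a subcategory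 closed under isomorphisms such that $X\otimes Y$ and $Y\otimes X$ are objects of it whenever $X$ is an object of it and $Y$ is any object of $\mathcal{C}$. For a functor $T_g$ and subcategory $\mathcal{I}$, $T_g(\mathcal{I})$ denotes the image subcategory. *)

theory Defs
  imports "HOL-Algebra.Group"
begin

record ('o, 'm) scat =
  Ob   :: "'o set"
  Ar   :: "'m set"
  dm   :: "'m \<Rightarrow> 'o"
  cd   :: "'m \<Rightarrow> 'o"
  idt  :: "'o \<Rightarrow> 'm"
  cmp  :: "'m \<Rightarrow> 'm \<Rightarrow> 'm"   (* cmp C g f = g \<circ> f *)
  tno  :: "'o \<Rightarrow> 'o \<Rightarrow> 'o"
  tna  :: "'m \<Rightarrow> 'm \<Rightarrow> 'm"
  asc  :: "'o \<Rightarrow> 'o \<Rightarrow> 'o \<Rightarrow> 'm"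

definition hom :: "('o,'m,'x) scat_scheme \<Rightarrow> 'o \<Rightarrow> 'o \<Rightarrow> 'm set" where
  "hom C X Y = {f \<in> Ar C. dm C f = X \<and> cd C f = Y}"

definition is_category :: "('o,'m,'x) scat_scheme \<Rightarrow> bool" where
  "is_category C \<longleftrightarrow>
     (\<forall>f\<in>Ar C. dm C f \<in> Ob C \<and> cd C f \<in> Ob C) \<and>
     (\<forall>X\<in>Ob C. idt C X \<in> hom C X X) \<and>
     (\<forall>f\<in>Ar C. \<forall>g\<in>Ar C. cd C f = dm C g \<longrightarrow> cmp C g f \<in> hom C (dm C f) (cd C g)) \<and>
     (\<forall>f\<in>Ar C. cmp C f (idt C (dm C f)) = f \<and> cmp C (idt C (cd C f)) f = f) \<and>
     (\<forall>f\<in>Ar C. \<forall>g\<in>Ar C. \<forall>h\<in>Ar C. cd C f = dm C g \<longrightarrow> cd C g = dm C h \<longrightarrow>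
        cmp C h (cmp C g f) = cmp C (cmp C h g) f)"

definition iso :: "('o,'m,'x) scat_scheme \<Rightarrow> 'm \<Rightarrow> bool" where
  "iso C f \<longleftrightarrow> f \<in> Ar C \<and>
     (\<exists>g \<in> hom C (cd C f) (dm C f).
        cmp C g f = idt C (dm C f) \<and> cmp C f g = idt C (cd C f))"

definition is_tensor :: "('o,'m,'x) scat_scheme \<Rightarrow> bool" where
  "is_tensor C \<longleftrightarrow>
     (\<forall>X\<in>Ob C. \<forall>Y\<in>Ob C. tno C X Y \<in> Ob C) \<and>
     (\<forall>f\<in>Ar C. \<forall>g\<in>Ar C. tna C f g \<in> hom C (tno C (dm C f) (dm C g)) (tno C (cd C f) (cd C g))) \<and>
     (\<forall>X\<in>Ob C. \<forall>Y\<in>Ob C. tna C (idt C X) (idt C Y) = idt C (tno C X Y)) \<and>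
     (\<forall>f\<in>Ar C. \<forall>f'\<in>Ar C. \<forall>g\<in>Ar C. \<forall>g'\<in>Ar C. cd C f = dm C f' \<longrightarrow> cd C g = dm C g' \<longrightarrow>
        tna C (cmp C f' f) (cmp C g' g) = cmp C (tna C f' g') (tna C f g))"

definition semigroupal_category :: "('o,'m,'x) scat_scheme \<Rightarrow> bool" where
  "semigroupal_category C \<longleftrightarrow> is_category C \<and> is_tensor C \<and>
     (\<forall>X\<in>Ob C. \<forall>Y\<in>Ob C. \<forall>Z\<in>Ob C.
        asc C X Y Z \<in> hom C (tno C (tno C X Y) Z) (tno C X (tno C Y Z)) \<and> iso C (asc C X Y Z)) \<and>
     (\<forall>f\<in>Ar C. \<forall>g\<in>Ar C. \<forall>h\<in>Ar C.
        cmp C (asc C (cd C f) (cd C g) (cd C h)) (tna C (tna C f g) h)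
        = cmp C (tna C f (tna C g h)) (asc C (dm C f) (dm C g) (dm C h))) \<and>
     (\<forall>W\<in>Ob C. \<forall>X\<in>Ob C. \<forall>Y\<in>Ob C. \<forall>Z\<in>Ob C.
        cmp C (asc C W X (tno C Y Z)) (asc C (tno C W X) Y Z)
        = cmp C (tna C (idt C W) (asc C X Y Z))
            (cmp C (asc C W (tno C X Y) Z) (tna C (asc C W X Y) (idt C Z))))"

text \<open>A functor is given by its object and morphism maps (only their values on the
 carriers matter).\<close>

definition is_functor :: "('o,'m,'x) scat_scheme \<Rightarrow> ('p,'n,'y) scat_scheme \<Rightarrow>
    ('o \<Rightarrow> 'p) \<Rightarrow> ('m \<Rightarrow> 'n) \<Rightarrow> bool" where
  "is_functor C D Fo Fa \<longleftrightarrow>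
     (\<forall>X\<in>Ob C. Fo X \<in> Ob D) \<and>
     (\<forall>f\<in>Ar C. Fa f \<in> hom D (Fo (dm C f)) (Fo (cd C f))) \<and>
     (\<forall>X\<in>Ob C. Fa (idt C X) = idt D (Fo X)) \<and>
     (\<forall>f\<in>Ar C. \<forall>g\<in>Ar C. cd C f = dm C g \<longrightarrow> Fa (cmp C g f) = cmp D (Fa g) (Fa f))"

definition nat_iso :: "('o,'m,'x) scat_scheme \<Rightarrow> ('p,'n,'y) scat_scheme \<Rightarrow>
    ('o \<Rightarrow> 'p) \<Rightarrow> ('m \<Rightarrow> 'n) \<Rightarrow> ('o \<Rightarrow> 'p) \<Rightarrow> ('m \<Rightarrow> 'n) \<Rightarrow> ('o \<Rightarrow> 'n) \<Rightarrow> bool" where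
  "nat_iso C D Fo Fa Go Ga \<eta> \<longleftrightarrow>
     (\<forall>X\<in>Ob C. \<eta> X \<in> hom D (Fo X) (Go X) \<and> iso D (\<eta> X)) \<and>
     (\<forall>f\<in>Ar C. cmp D (\<eta> (cd C f)) (Fa f) = cmp D (Ga f) (\<eta> (dm C f)))"

definition is_equivalence :: "('o,'m,'x) scat_scheme \<Rightarrow> ('p,'n,'y) scat_scheme \<Rightarrow>
    ('o \<Rightarrow> 'p) \<Rightarrow> ('m \<Rightarrow> 'n) \<Rightarrow> bool" where
  "is_equivalence C D Fo Fa \<longleftrightarrow> is_functor C D Fo Fa \<and>
     (\<exists>Go Ga \<eta> \<epsilon>. is_functor D C Go Ga \<and>
        nat_iso C C id id (Go \<circ> Fo) (Ga \<circ> Fa) \<eta> \<and>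
        nat_iso D D (Fo \<circ> Go) (Fa \<circ> Ga) id id \<epsilon>)"

text \<open>A semigroupal endofunctor: object map, morphism map, and structure isomorphisms
 J X Y : F X \<otimes> F Y \<rightarrow> F (X \<otimes> Y).\<close>

type_synonym ('o,'m) sgfun = "('o \<Rightarrow> 'o) \<times> ('m \<Rightarrow> 'm) \<times> ('o \<Rightarrow> 'o \<Rightarrow> 'm)"

definition fo :: "('o,'m) sgfun \<Rightarrow> 'o \<Rightarrow> 'o" where "fo F = fst F"
definition fa :: "('o,'m) sgfun \<Rightarrow> 'm \<Rightarrow> 'm" where "fa F = fst (snd F)"
definition fj :: "('o,'m) sgfun \<Rightarrow> 'o \<Rightarrow> 'o \<Rightarrow> 'm" where "fj F = snd (snd F)"

definition semigroupal_functor :: "('o,'m,'x) scat_scheme \<Rightarrow> ('o,'m) sgfun \<Rightarrow> bool" where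
  "semigroupal_functor C F \<longleftrightarrow> is_functor C C (fo F) (fa F) \<and>
     (\<forall>X\<in>Ob C. \<forall>Y\<in>Ob C. fj F X Y \<in> hom C (tno C (fo F X) (fo F Y)) (fo F (tno C X Y))
                          \<and> iso C (fj F X Y)) \<and>
     (\<forall>f\<in>Ar C. \<forall>g\<in>Ar C.
        cmp C (fj F (cd C f) (cd C g)) (tna C (fa F f) (fa F g))
        = cmp C (fa F (tna C f g)) (fj F (dm C f) (dm C g))) \<and>
     (\<forall>X\<in>Ob C. \<forall>Y\<in>Ob C. \<forall>Z\<in>Ob C.
        cmp C (fa F (asc C X Y Z)) (cmp C (fj F (tno C X Y) Z) (tna C (fj F X Y) (idt C (fo F Z))))
        = cmp C (fj F X (tno C Y Z)) (cmp C (tna C (idt C (fo F X)) (fj F Y Z)) (asc C (fo F X) (fo F Y) (fo F Z))))"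

definition semigroupal_autoequivalence :: "('o,'m,'x) scat_scheme \<Rightarrow> ('o,'m) sgfun \<Rightarrow> bool" where
  "semigroupal_autoequivalence C F \<longleftrightarrow>
     semigroupal_functor C F \<and> is_equivalence C C (fo F) (fa F)"

definition sg_nat_iso :: "('o,'m,'x) scat_scheme \<Rightarrow> ('o,'m) sgfun \<Rightarrow> ('o,'m) sgfun \<Rightarrow> ('o \<Rightarrow> 'm) \<Rightarrow> bool" where
  "sg_nat_iso C F G \<eta> \<longleftrightarrow> nat_iso C C (fo F) (fa F) (fo G) (fa G) \<eta> \<and>
     (\<forall>X\<in>Ob C. \<forall>Y\<in>Ob C.
        cmp C (\<eta> (tno C X Y)) (fj F X Y) = cmp C (fj G X Y) (tna C (\<eta> X) (\<eta> Y)))"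

definition sg_id :: "('o,'m,'x) scat_scheme \<Rightarrow> ('o,'m) sgfun" where
  "sg_id C = (id, id, \<lambda>X Y. idt C (tno C X Y))"

definition sg_comp :: "('o,'m,'x) scat_scheme \<Rightarrow> ('o,'m) sgfun \<Rightarrow> ('o,'m) sgfun \<Rightarrow> ('o,'m) sgfun" where
  "sg_comp C F G = (fo F \<circ> fo G, fa F \<circ> fa G,
     \<lambda>X Y. cmp C (fa F (fj G X Y)) (fj F (fo G X) (fo G Y)))"

definition group_action_on ::
  "('g,'b) monoid_scheme \<Rightarrow> ('o,'m,'x) scat_scheme \<Rightarrow> ('g \<Rightarrow> ('o,'m) sgfun) \<Rightarrow>
   ('g \<Rightarrow> 'g \<Rightarrow> 'o \<Rightarrow> 'm) \<Rightarrow> ('o \<Rightarrow> 'm) \<Rightarrow> bool" where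
  "group_action_on G C T \<gamma> u \<longleftrightarrow>
     (\<forall>g\<in>carrier G. semigroupal_autoequivalence C (T g)) \<and>
     (\<forall>g\<in>carrier G. \<forall>h\<in>carrier G.
        sg_nat_iso C (sg_comp C (T g) (T h)) (T (g \<otimes>\<^bsub>G\<^esub> h)) (\<gamma> g h)) \<and>
     sg_nat_iso C (sg_id C) (T \<one>\<^bsub>G\<^esub>) u \<and>
     (\<forall>g\<in>carrier G. \<forall>h\<in>carrier G. \<forall>k\<in>carrier G. \<forall>X\<in>Ob C.
        cmp C (\<gamma> (g \<otimes>\<^bsub>G\<^esub> h) k X) (\<gamma> g h (fo (T k) X))
        = cmp C (\<gamma> g (h \<otimes>\<^bsub>G\<^esub> k) X) (fa (T g) (\<gamma> h k X))) \<and>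
     (\<forall>g\<in>carrier G. \<forall>X\<in>Ob C.
        cmp C (\<gamma> \<one>\<^bsub>G\<^esub> g X) (u (fo (T g) X)) = idt C (fo (T g) X) \<and>
        cmp C (u (fo (T g) X)) (\<gamma> \<one>\<^bsub>G\<^esub> g X) = idt C (fo (T \<one>\<^bsub>G\<^esub>) (fo (T g) X))) \<and>
     (\<forall>g\<in>carrier G. \<forall>X\<in>Ob C.
        cmp C (\<gamma> g \<one>\<^bsub>G\<^esub> X) (fa (T g) (u X)) = idt C (fo (T g) X) \<and>
        cmp C (fa (T g) (u X)) (\<gamma> g \<one>\<^bsub>G\<^esub> X) = idt C (fo (T g) (fo (T \<one>\<^bsub>G\<^esub>) X)))"

text \<open>A subcategory (or just a collection of objects and morphisms) is a pair
 (set of objects, set of morphisms).\<close>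

definition subcategory :: "('o,'m,'x) scat_scheme \<Rightarrow> 'o set \<times> 'm set \<Rightarrow> bool" where
  "subcategory C D \<longleftrightarrow> fst D \<subseteq> Ob C \<and> snd D \<subseteq> Ar C \<and>
     (\<forall>f\<in>snd D. dm C f \<in> fst D \<and> cd C f \<in> fst D) \<and>
     (\<forall>X\<in>fst D. idt C X \<in> snd D) \<and>
     (\<forall>f\<in>snd D. \<forall>g\<in>snd D. cd C f = dm C g \<longrightarrow> cmp C g f \<in> snd D)"

definition iso_closed :: "('o,'m,'x) scat_scheme \<Rightarrow> 'o set \<times> 'm set \<Rightarrow> bool" where
  "iso_closed C D \<longleftrightarrow>
     (\<forall>X\<in>fst D. \<forall>\<phi>. iso C \<phi> \<and> dm C \<phi> = X \<longrightarrow> cd C \<phi> \<in> fst D \<and> \<phi> \<in> snd D)"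

definition iso_closure :: "('o,'m,'x) scat_scheme \<Rightarrow> 'o set \<times> 'm set \<Rightarrow> 'o set \<times> 'm set" where
  "iso_closure C D =
     (let S = {E. subcategory C E \<and> fst D \<subseteq> fst E \<and> snd D \<subseteq> snd E \<and> iso_closed C E}
      in (\<Inter>(fst ` S), \<Inter>(snd ` S)))"

definition is_ideal :: "('o,'m,'x) scat_scheme \<Rightarrow> 'o set \<times> 'm set \<Rightarrow> bool" where
  "is_ideal C I \<longleftrightarrow> subcategory C I \<and> iso_closed C I \<and>
     (\<forall>X\<in>fst I. \<forall>Y\<in>Ob C. tno C X Y \<in> fst I \<and> tno C Y X \<in> fst I)"

definition image_sub :: "('o,'m) sgfun \<Rightarrow> 'o set \<times> 'm set \<Rightarrow> 'o set \<times> 'm set" where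
  "image_sub F D = (fo F ` fst D, fa F ` snd D)"

end

(* The isomorphism closure is governed by a Galois connection: for a replete
   (isomorphism-closed) subcategory K, the closure of F(D) lies in K iff D lies in the
   preimage of K under F. Preimages of replete subcategories under functors are replete,
   and naturally isomorphic functors have the same preimages of replete subcategories,
   because a replete subcategory contains an arrow iff it contains any arrow isomorphic to
   it in the arrow category. Hence the closure of F(closure D) is the closure of F(D), and
   the closure of F(D) only depends on F up to natural isomorphism; both claims follow
   from the natural isomorphisms u : Id => T_e and gamma_{g,h} : T_g T_h => T_gh. *)

theory Submission
  imports Defs "HOL-Library.Product_Order"
begin

lemma mem_hom_iff: "f \<in> Defs.hom C X Y \<longleftrightarrow> f \<in> Ar C \<and> dm C f = X \<and> cd C f = Y"
  by (simp add: Defs.hom_def)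

lemma category_dm_cd:
  "is_category C \<Longrightarrow> f \<in> Ar C \<Longrightarrow> dm C f \<in> Ob C \<and> cd C f \<in> Ob C"
  by (simp add: is_category_def)

lemma category_idt:
  "is_category C \<Longrightarrow> X \<in> Ob C \<Longrightarrow> idt C X \<in> Ar C \<and> dm C (idt C X) = X \<and> cd C (idt C X) = X"
  by (simp add: is_category_def mem_hom_iff)

lemma category_cmp:
  "is_category C \<Longrightarrow> f \<in> Ar C \<Longrightarrow> g \<in> Ar C \<Longrightarrow> cd C f = dm C g \<Longrightarrow>
   cmp C g f \<in> Ar C \<and> dm C (cmp C g f) = dm C f \<and> cd C (cmp C g f) = cd C g"
  unfolding is_category_def mem_hom_iff by blast

lemma category_cmp_idt_right: "is_category C \<Longrightarrow> f \<in> Ar C \<Longrightarrow> cmp C f (idt C (dm C f)) = f"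
  by (simp add: is_category_def)

lemma category_cmp_idt_left: "is_category C \<Longrightarrow> f \<in> Ar C \<Longrightarrow> cmp C (idt C (cd C f)) f = f"
  by (simp add: is_category_def)

lemma category_cmp_assoc:
  "is_category C \<Longrightarrow> f \<in> Ar C \<Longrightarrow> g \<in> Ar C \<Longrightarrow> h \<in> Ar C \<Longrightarrow>
   cd C f = dm C g \<Longrightarrow> cd C g = dm C h \<Longrightarrow> cmp C h (cmp C g f) = cmp C (cmp C h g) f"
  unfolding is_category_def by blast

lemma functor_Ob: "is_functor C D Fo Fa \<Longrightarrow> X \<in> Ob C \<Longrightarrow> Fo X \<in> Ob D"
  by (simp add: is_functor_def)

lemma functor_Ar:
  "is_functor C D Fo Fa \<Longrightarrow> f \<in> Ar C \<Longrightarrow>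
   Fa f \<in> Ar D \<and> dm D (Fa f) = Fo (dm C f) \<and> cd D (Fa f) = Fo (cd C f)"
  by (simp add: is_functor_def mem_hom_iff)

lemma functor_idt: "is_functor C D Fo Fa \<Longrightarrow> X \<in> Ob C \<Longrightarrow> Fa (idt C X) = idt D (Fo X)"
  by (simp add: is_functor_def)

lemma functor_cmp:
  "is_functor C D Fo Fa \<Longrightarrow> f \<in> Ar C \<Longrightarrow> g \<in> Ar C \<Longrightarrow> cd C f = dm C g \<Longrightarrow>
   Fa (cmp C g f) = cmp D (Fa g) (Fa f)"
  by (simp add: is_functor_def)

lemma sg_id_functor: "is_category C \<Longrightarrow> is_functor C C (fo (sg_id C)) (fa (sg_id C))"
  by (auto simp: is_functor_def sg_id_def fo_def fa_def is_category_def Defs.hom_def)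

lemma sg_comp_functor:
  assumes "is_functor C C (fo F) (fa F)" and "is_functor C C (fo G) (fa G)"
  shows "is_functor C C (fo (sg_comp C F G)) (fa (sg_comp C F G))"
  using assms unfolding is_functor_def[of C C "fo (sg_comp C F G)"] mem_hom_iff
  by (auto simp: sg_comp_def fo_def fa_def functor_Ob functor_Ar functor_idt functor_cmp)

lemma iso_inverse:
  assumes "iso C \<phi>"
  obtains \<psi> where "\<psi> \<in> Ar C" "dm C \<psi> = cd C \<phi>" "cd C \<psi> = dm C \<phi>" "iso C \<psi>"
    "cmp C \<psi> \<phi> = idt C (dm C \<phi>)" "cmp C \<phi> \<psi> = idt C (cd C \<phi>)"
proof -
  from assms obtain \<psi> where \<psi>: "\<psi> \<in> hom C (cd C \<phi>) (dm C \<phi>)"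
    "cmp C \<psi> \<phi> = idt C (dm C \<phi>)" "cmp C \<phi> \<psi> = idt C (cd C \<phi>)" and "\<phi> \<in> Ar C"
    unfolding iso_def by blast
  then have "iso C \<psi>" by (auto simp: iso_def Defs.hom_def)
  with \<psi> show thesis using that by (auto simp: mem_hom_iff)
qed

lemma functor_preserves_iso:
  assumes C: "is_category C" and F: "is_functor C C Fo Fa" and "iso C \<phi>"
  shows "iso C (Fa \<phi>)"
proof -
  obtain \<psi> where \<psi>: "\<psi> \<in> Ar C" "dm C \<psi> = cd C \<phi>" "cd C \<psi> = dm C \<phi>"
    "cmp C \<psi> \<phi> = idt C (dm C \<phi>)" "cmp C \<phi> \<psi> = idt C (cd C \<phi>)"
    using iso_inverse[OF \<open>iso C \<phi>\<close>] by metis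
  have \<phi>: "\<phi> \<in> Ar C" using \<open>iso C \<phi>\<close> by (simp add: iso_def)
  have "cmp C (Fa \<psi>) (Fa \<phi>) = idt C (dm C (Fa \<phi>))"
    using functor_cmp[OF F \<phi> \<psi>(1)] functor_idt[OF F] category_dm_cd[OF C \<phi>] functor_Ar[OF F \<phi>] \<psi>
    by simp
  moreover have "cmp C (Fa \<phi>) (Fa \<psi>) = idt C (cd C (Fa \<phi>))"
    using functor_cmp[OF F \<psi>(1) \<phi>] functor_idt[OF F] category_dm_cd[OF C \<phi>] functor_Ar[OF F \<phi>] \<psi>
    by simp
  ultimately show ?thesis
    using functor_Ar[OF F \<phi>] functor_Ar[OF F \<psi>(1)] \<psi> by (auto simp: iso_def mem_hom_iff)
qed

definition replete :: "('o,'m,'x) scat_scheme \<Rightarrow> 'o set \<times> 'm set \<Rightarrow> bool" where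
  "replete C K \<longleftrightarrow> subcategory C K \<and> iso_closed C K"

lemma replete_le: "replete C K \<Longrightarrow> K \<le> (Ob C, Ar C)"
  by (simp add: replete_def subcategory_def less_eq_prod_def)

lemma replete_idt_iff:
  assumes "is_category C" "replete C K" "X \<in> Ob C"
  shows "idt C X \<in> snd K \<longleftrightarrow> X \<in> fst K"
  using assms category_idt[OF assms(1,3)] by (metis replete_def subcategory_def)

lemma replete_cmp:
  "replete C K \<Longrightarrow> f \<in> snd K \<Longrightarrow> g \<in> snd K \<Longrightarrow> cd C f = dm C g \<Longrightarrow> cmp C g f \<in> snd K"
  by (simp add: replete_def subcategory_def)

lemma replete_dm_cd: "replete C K \<Longrightarrow> f \<in> snd K \<Longrightarrow> dm C f \<in> fst K \<and> cd C f \<in> fst K"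
  by (simp add: replete_def subcategory_def)

lemma replete_iso:
  assumes K: "replete C K" and "iso C \<phi>" and "dm C \<phi> \<in> fst K \<or> cd C \<phi> \<in> fst K"
  shows "\<phi> \<in> snd K"
proof -
  have closed: "\<And>\<psi>. iso C \<psi> \<Longrightarrow> dm C \<psi> \<in> fst K \<Longrightarrow> cd C \<psi> \<in> fst K \<and> \<psi> \<in> snd K"
    using K by (simp add: replete_def iso_closed_def)
  obtain \<psi> where "dm C \<psi> = cd C \<phi>" "cd C \<psi> = dm C \<phi>" "iso C \<psi>"
    using iso_inverse[OF \<open>iso C \<phi>\<close>] by metis
  then have "dm C \<phi> \<in> fst K"
    using closed \<open>dm C \<phi> \<in> fst K \<or> cd C \<phi> \<in> fst K\<close> by metis
  then show ?thesis using closed \<open>iso C \<phi>\<close> by blast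
qed

lemma replete_iso_square:
  assumes C: "is_category C" and K: "replete C K"
    and a: "a \<in> Ar C" and b: "b \<in> Ar C" and "iso C \<phi>" "iso C \<psi>"
    and \<phi>: "dm C \<phi> = dm C a" "cd C \<phi> = dm C b"
    and \<psi>: "dm C \<psi> = cd C a" "cd C \<psi> = cd C b"
    and square: "cmp C \<psi> a = cmp C b \<phi>"
  shows "a \<in> snd K \<longleftrightarrow> b \<in> snd K"
proof -
  have \<phi>\<psi>: "\<phi> \<in> Ar C" "\<psi> \<in> Ar C" using \<open>iso C \<phi>\<close> \<open>iso C \<psi>\<close> by (simp_all add: iso_def)
  obtain \<phi>' where \<phi>': "\<phi>' \<in> Ar C" "dm C \<phi>' = cd C \<phi>" "cd C \<phi>' = dm C \<phi>" "iso C \<phi>'"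
    "cmp C \<phi> \<phi>' = idt C (cd C \<phi>)"
    using iso_inverse[OF \<open>iso C \<phi>\<close>] by metis
  obtain \<psi>' where \<psi>': "\<psi>' \<in> Ar C" "dm C \<psi>' = cd C \<psi>" "cd C \<psi>' = dm C \<psi>" "iso C \<psi>'"
    "cmp C \<psi>' \<psi> = idt C (dm C \<psi>)"
    using iso_inverse[OF \<open>iso C \<psi>\<close>] by metis
  have b_eq: "b = cmp C (cmp C \<psi> a) \<phi>'"
  proof -
    have "b = cmp C b (cmp C \<phi> \<phi>')" using category_cmp_idt_right[OF C b] \<phi> \<phi>' by simp
    also have "\<dots> = cmp C (cmp C b \<phi>) \<phi>'"
      using category_cmp_assoc[OF C \<phi>'(1) \<phi>\<psi>(1) b] \<phi> \<phi>' by simp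
    finally show ?thesis using square by simp
  qed
  have a_eq: "a = cmp C \<psi>' (cmp C b \<phi>)"
  proof -
    have "a = cmp C (cmp C \<psi>' \<psi>) a" using category_cmp_idt_left[OF C a] \<psi> \<psi>' by simp
    also have "\<dots> = cmp C \<psi>' (cmp C \<psi> a)"
      using category_cmp_assoc[OF C a \<phi>\<psi>(2) \<psi>'(1)] \<psi> \<psi>' by simp
    finally show ?thesis using square by simp
  qed
  show ?thesis
  proof
    assume "a \<in> snd K"
    then have "\<psi> \<in> snd K" "\<phi>' \<in> snd K"
      using replete_iso[OF K] replete_dm_cd[OF K] \<phi> \<psi> \<phi>' \<open>iso C \<psi>\<close> by metis+
    then show "b \<in> snd K"
      using b_eq replete_cmp[OF K] \<open>a \<in> snd K\<close> category_cmp[OF C a \<phi>\<psi>(2)] \<phi> \<psi> \<phi>' by metis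
  next
    assume "b \<in> snd K"
    then have "\<phi> \<in> snd K" "\<psi>' \<in> snd K"
      using replete_iso[OF K] replete_dm_cd[OF K] \<phi> \<psi> \<psi>' \<open>iso C \<phi>\<close> by metis+
    then show "a \<in> snd K"
      using a_eq replete_cmp[OF K] \<open>b \<in> snd K\<close> category_cmp[OF C \<phi>\<psi>(1) b] \<phi> \<psi> \<psi>' by metis
  qed
qed

lemma le_iso_closure: "D \<le> iso_closure C D"
  by (auto simp: iso_closure_def Let_def less_eq_prod_def)

lemma iso_closure_le_iff:
  assumes "replete C K"
  shows "iso_closure C D \<le> K \<longleftrightarrow> D \<le> K"
proof
  show "D \<le> K" if "iso_closure C D \<le> K"
    using le_iso_closure that by (rule order.trans)
  show "iso_closure C D \<le> K" if "D \<le> K"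
  proof -
    have "K \<in> {E. subcategory C E \<and> fst D \<subseteq> fst E \<and> snd D \<subseteq> snd E \<and> iso_closed C E}"
      using assms that by (simp add: replete_def less_eq_prod_def)
    then show ?thesis unfolding iso_closure_def Let_def less_eq_prod_def by (simp add: Inter_lower)
  qed
qed

lemma replete_iso_closure:
  assumes C: "is_category C" and D: "D \<le> (Ob C, Ar C)"
  shows "replete C (iso_closure C D)"
proof -
  define S where "S = {E. replete C E \<and> D \<le> E}"
  have "S = {E. subcategory C E \<and> fst D \<subseteq> fst E \<and> snd D \<subseteq> snd E \<and> iso_closed C E}"
    by (auto simp: S_def replete_def less_eq_prod_def)
  then have closure_eq: "iso_closure C D = (\<Inter>(fst ` S), \<Inter>(snd ` S))"
    by (simp add: iso_closure_def Let_def)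
  have "(Ob C, Ar C) \<in> S"
    using C D unfolding S_def replete_def subcategory_def iso_closed_def iso_def is_category_def
    by (auto simp: Defs.hom_def)
  then have "\<Inter>(fst ` S) \<subseteq> Ob C" "\<Inter>(snd ` S) \<subseteq> Ar C" by force+
  moreover have "subcategory C E" "iso_closed C E" if "E \<in> S" for E
    using that by (simp_all add: S_def replete_def)
  ultimately show ?thesis
    unfolding closure_eq replete_def subcategory_def iso_closed_def by auto
qed

lemma iso_closure_replete:
  assumes "is_category C" "replete C K"
  shows "iso_closure C K = K"
  using iso_closure_le_iff[OF assms(2)] le_iso_closure by (blast intro: order.antisym)

lemma replete_eqI:
  assumes "replete C A" "replete C B" "\<And>K. replete C K \<Longrightarrow> A \<le> K \<longleftrightarrow> B \<le> K"
  shows "A = B"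
  using assms by (blast intro: order.antisym)

definition preimage_sub :: "('o,'m,'x) scat_scheme \<Rightarrow> ('o,'m) sgfun \<Rightarrow> 'o set \<times> 'm set \<Rightarrow> 'o set \<times> 'm set" where
  "preimage_sub C F K = ({X \<in> Ob C. fo F X \<in> fst K}, {f \<in> Ar C. fa F f \<in> snd K})"

lemma image_sub_le_iff:
  "D \<le> (Ob C, Ar C) \<Longrightarrow> image_sub F D \<le> K \<longleftrightarrow> D \<le> preimage_sub C F K"
  by (auto simp: image_sub_def preimage_sub_def less_eq_prod_def)

lemma image_sub_le:
  "is_functor C C (fo F) (fa F) \<Longrightarrow> D \<le> (Ob C, Ar C) \<Longrightarrow> image_sub F D \<le> (Ob C, Ar C)"
  by (auto simp: image_sub_def less_eq_prod_def functor_Ob functor_Ar)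

lemma image_sub_sg_id: "image_sub (sg_id C) D = D"
  by (simp add: image_sub_def sg_id_def fo_def fa_def)

lemma image_sub_sg_comp: "image_sub (sg_comp C F G) D = image_sub F (image_sub G D)"
  by (simp add: image_sub_def sg_comp_def fo_def fa_def image_comp)

lemma replete_preimage_sub:
  assumes C: "is_category C" and F: "is_functor C C (fo F) (fa F)" and K: "replete C K"
  shows "replete C (preimage_sub C F K)"
  unfolding replete_def
proof
  show "subcategory C (preimage_sub C F K)"
    using K unfolding subcategory_def preimage_sub_def replete_def
    by (auto simp: category_dm_cd[OF C] category_idt[OF C] category_cmp[OF C]
        functor_Ar[OF F] functor_idt[OF F] functor_cmp[OF F])
  show "iso_closed C (preimage_sub C F K)"
    unfolding iso_closed_def
  proof (intro ballI allI impI)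
    fix X \<phi> assume X: "X \<in> fst (preimage_sub C F K)" and \<phi>: "iso C \<phi> \<and> dm C \<phi> = X"
    then have "\<phi> \<in> Ar C" by (simp add: iso_def)
    moreover have "fa F \<phi> \<in> snd K"
      using replete_iso[OF K functor_preserves_iso[OF C F]] functor_Ar[OF F \<open>\<phi> \<in> Ar C\<close>] X \<phi>
      by (auto simp: preimage_sub_def)
    ultimately show "cd C \<phi> \<in> fst (preimage_sub C F K) \<and> \<phi> \<in> snd (preimage_sub C F K)"
      using replete_dm_cd[OF K] functor_Ar[OF F] category_dm_cd[OF C] by (fastforce simp: preimage_sub_def)
  qed
qed

lemma preimage_sub_sg_comp:
  assumes "is_functor C C (fo G) (fa G)"
  shows "preimage_sub C (sg_comp C F G) K = preimage_sub C G (preimage_sub C F K)"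
  using assms by (auto simp: preimage_sub_def sg_comp_def fo_def fa_def functor_Ob functor_Ar)

lemma preimage_sub_nat_iso:
  assumes C: "is_category C" and K: "replete C K"
    and F: "is_functor C C (fo F) (fa F)" and G: "is_functor C C (fo G) (fa G)"
    and \<eta>: "nat_iso C C (fo F) (fa F) (fo G) (fa G) \<eta>"
  shows "preimage_sub C F K = preimage_sub C G K"
proof -
  have Ar_iff: "fa F f \<in> snd K \<longleftrightarrow> fa G f \<in> snd K" if f: "f \<in> Ar C" for f
  proof (rule replete_iso_square[OF C K])
    show "cmp C (\<eta> (cd C f)) (fa F f) = cmp C (fa G f) (\<eta> (dm C f))"
      using \<eta> f by (simp add: nat_iso_def)
  qed (use \<eta> f category_dm_cd[OF C f] functor_Ar[OF F f] functor_Ar[OF G f] in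
        \<open>auto simp: nat_iso_def mem_hom_iff\<close>)
  have "fo F X \<in> fst K \<longleftrightarrow> fo G X \<in> fst K" if X: "X \<in> Ob C" for X
    using Ar_iff[of "idt C X"] category_idt[OF C X] functor_idt[OF F X] functor_idt[OF G X]
      replete_idt_iff[OF C K] functor_Ob[OF F X] functor_Ob[OF G X] by simp
  with Ar_iff show ?thesis by (auto simp: preimage_sub_def)
qed

lemma iso_closure_image_le_iff:
  "D \<le> (Ob C, Ar C) \<Longrightarrow> replete C K \<Longrightarrow>
   iso_closure C (image_sub F D) \<le> K \<longleftrightarrow> D \<le> preimage_sub C F K"
  by (simp add: iso_closure_le_iff image_sub_le_iff)

lemma iso_closure_image_iso_closure:
  assumes C: "is_category C" and F: "is_functor C C (fo F) (fa F)" and D: "D \<le> (Ob C, Ar C)"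
  shows "iso_closure C (image_sub F (iso_closure C D)) = iso_closure C (image_sub F D)"
proof (rule replete_eqI)
  have closure_le: "iso_closure C D \<le> (Ob C, Ar C)"
    using replete_le replete_iso_closure[OF C D] .
  show "replete C (iso_closure C (image_sub F (iso_closure C D)))"
    using replete_iso_closure[OF C image_sub_le[OF F closure_le]] .
  show "replete C (iso_closure C (image_sub F D))"
    using replete_iso_closure[OF C image_sub_le[OF F D]] .
  fix K assume K: "replete C K"
  have "iso_closure C (image_sub F (iso_closure C D)) \<le> K \<longleftrightarrow> iso_closure C D \<le> preimage_sub C F K"
    using iso_closure_image_le_iff[OF closure_le K] .
  also have "\<dots> \<longleftrightarrow> D \<le> preimage_sub C F K"
    using iso_closure_le_iff[OF replete_preimage_sub[OF C F K]] .
  also have "\<dots> \<longleftrightarrow> iso_closure C (image_sub F D) \<le> K"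
    using iso_closure_image_le_iff[OF D K] by simp
  finally show "iso_closure C (image_sub F (iso_closure C D)) \<le> K \<longleftrightarrow>
    iso_closure C (image_sub F D) \<le> K" .
qed

lemma iso_closure_image_nat_iso:
  assumes C: "is_category C" and D: "D \<le> (Ob C, Ar C)"
    and F: "is_functor C C (fo F) (fa F)" and G: "is_functor C C (fo G) (fa G)"
    and \<eta>: "nat_iso C C (fo F) (fa F) (fo G) (fa G) \<eta>"
  shows "iso_closure C (image_sub F D) = iso_closure C (image_sub G D)"
proof (rule replete_eqI)
  show "replete C (iso_closure C (image_sub F D))" "replete C (iso_closure C (image_sub G D))"
    using replete_iso_closure[OF C image_sub_le[OF _ D]] F G by blast+
  fix K assume K: "replete C K"
  then show "iso_closure C (image_sub F D) \<le> K \<longleftrightarrow> iso_closure C (image_sub G D) \<le> K"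
    using iso_closure_image_le_iff[OF D K] preimage_sub_nat_iso[OF C K F G \<eta>] by simp
qed

lemma group_action_functor:
  "group_action_on G C T \<gamma> u \<Longrightarrow> g \<in> carrier G \<Longrightarrow> is_functor C C (fo (T g)) (fa (T g))"
  by (simp add: group_action_on_def semigroupal_autoequivalence_def semigroupal_functor_def)

lemma group_action_unit_nat_iso:
  "group_action_on G C T \<gamma> u \<Longrightarrow>
   nat_iso C C (fo (sg_id C)) (fa (sg_id C)) (fo (T \<one>\<^bsub>G\<^esub>)) (fa (T \<one>\<^bsub>G\<^esub>)) u"
  by (simp add: group_action_on_def sg_nat_iso_def)

lemma group_action_mult_nat_iso:
  "group_action_on G C T \<gamma> u \<Longrightarrow> g \<in> carrier G \<Longrightarrow> h \<in> carrier G \<Longrightarrow>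
   nat_iso C C (fo (sg_comp C (T g) (T h))) (fa (sg_comp C (T g) (T h)))
     (fo (T (g \<otimes>\<^bsub>G\<^esub> h))) (fa (T (g \<otimes>\<^bsub>G\<^esub> h))) (\<gamma> g h)"
  by (simp add: group_action_on_def sg_nat_iso_def)

theorem lemma2p19:
  fixes G :: "('g, 'b) monoid_scheme"
    and C :: "('o, 'm, 'x) scat_scheme"
    and T :: "'g \<Rightarrow> ('o, 'm) sgfun"
    and \<gamma> :: "'g \<Rightarrow> 'g \<Rightarrow> 'o \<Rightarrow> 'm"
    and u :: "'o \<Rightarrow> 'm"
    and I :: "'o set \<times> 'm set"
  assumes "group G"
    and "semigroupal_category C"
    and "group_action_on G C T \<gamma> u"
    and "is_ideal C I"
  shows "iso_closure C (image_sub (T \<one>\<^bsub>G\<^esub>) I) = I \<and>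
         (\<forall>g\<in>carrier G. \<forall>h\<in>carrier G.
           iso_closure C (image_sub (T g) (iso_closure C (image_sub (T h) I)))
           = iso_closure C (image_sub (T (g \<otimes>\<^bsub>G\<^esub> h)) I))"
proof (intro conjI ballI)
  have C: "is_category C" using assms(2) by (simp add: semigroupal_category_def)
  have I: "replete C I" using assms(4) by (simp add: is_ideal_def replete_def)
  note I_le = replete_le[OF I]
  note T = group_action_functor[OF assms(3)]
  have "iso_closure C (image_sub (T \<one>\<^bsub>G\<^esub>) I) = iso_closure C (image_sub (sg_id C) I)"
    using iso_closure_image_nat_iso[OF C I_le sg_id_functor[OF C] T group_action_unit_nat_iso[OF assms(3)]]
      monoid.one_closed[OF group.is_monoid[OF assms(1)]] by simp
  also have "\<dots> = I" using iso_closure_replete[OF C I] by (simp add: image_sub_sg_id)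
  finally show "iso_closure C (image_sub (T \<one>\<^bsub>G\<^esub>) I) = I" .
  fix g h assume g: "g \<in> carrier G" and h: "h \<in> carrier G"
  have "iso_closure C (image_sub (T g) (iso_closure C (image_sub (T h) I)))
      = iso_closure C (image_sub (sg_comp C (T g) (T h)) I)"
    using iso_closure_image_iso_closure[OF C T[OF g] image_sub_le[OF T[OF h] I_le]]
    by (simp add: image_sub_sg_comp)
  also have "\<dots> = iso_closure C (image_sub (T (g \<otimes>\<^bsub>G\<^esub> h)) I)"
    using iso_closure_image_nat_iso[OF C I_le sg_comp_functor[OF T[OF g] T[OF h]]
        T[OF monoid.m_closed[OF group.is_monoid[OF assms(1)] g h]]
        group_action_mult_nat_iso[OF assms(3) g h]] .
  finally show "iso_closure C (image_sub (T g) (iso_closure C (image_sub (T h) I)))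
      = iso_closure C (image_sub (T (g \<otimes>\<^bsub>G\<^esub> h)) I)" .
qed

end
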